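(* Let $d\ge 2$ be an integer and $\theta>0$. There is no tournament of Type (1) with $n=2d$ vertices whose Seidel matrix has spectrum $\{(-\theta)^{d-1},0^{2},\theta^{d-1}\}$ (exponents denote multiplicities).
   Context: A tournament on vertex set $V$ is an orientation of the complete graph on $V$; its adjacency matrix $A$ has $A_{xy}=1$ if $x\to y$ and $0$ otherwise, and its Seidel matrix is $S=\sqrt{-1}(A-A^T)$. Let $\tau_1<\cdots<\tau_s$ be the distinct eigenvalues of $S$ with multiplicities $m_i$, and main angles $\beta_i=\frac1{\sqrt n}\|E_ij\|$, where $E_i$ is the orthogonal projection onto the $\tau_i$-eigenspace and $j$ the all-ones vector. The tournament is of Type (1) if $\beta_1=0$; of Type (2) if $\beta_1\neq0$ and $m_1>1$; of Type (3) if $m_1=1$, $\beta_2=0$ and $c_2<0$, where $c_2=n\beta_1^2/(\tau_1-\tau_2)+\sum_{i=3}^s n\beta_i^2/(\tau_i-\tau_2)$; and of Type (4) otherwise. *)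

theory Defs
  imports "Jordan_Normal_Form.Char_Poly" "HOL-Computational_Algebra.Polynomial"
begin

definition tournament :: "nat \<Rightarrow> (nat \<Rightarrow> nat \<Rightarrow> bool) \<Rightarrow> bool" where
  "tournament n T \<longleftrightarrow> (\<forall>x<n. \<not> T x x) \<and>
     (\<forall>x<n. \<forall>y<n. x \<noteq> y \<longrightarrow> (T x y \<longleftrightarrow> \<not> T y x))"

definition adj_mat :: "nat \<Rightarrow> (nat \<Rightarrow> nat \<Rightarrow> bool) \<Rightarrow> complex mat" where
  "adj_mat n T = mat n n (\<lambda>(x, y). if T x y then 1 else 0)"

definition seidel_mat :: "nat \<Rightarrow> (nat \<Rightarrow> nat \<Rightarrow> bool) \<Rightarrow> complex mat" where
  "seidel_mat n T = \<i> \<cdot>\<^sub>m (adj_mat n T - transpose_mat (adj_mat n T))"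

definition eigenspace :: "complex mat \<Rightarrow> real \<Rightarrow> complex vec set" where
  "eigenspace S t = {v \<in> carrier_vec (dim_row S). S *\<^sub>v v = complex_of_real t \<cdot>\<^sub>v v}"

definition eig_proj :: "complex mat \<Rightarrow> real \<Rightarrow> complex vec \<Rightarrow> complex vec" where
  "eig_proj S t v = (THE w. w \<in> eigenspace S t \<and>
      (\<forall>u \<in> eigenspace S t. (\<Sum>i<dim_row S. (v $ i - w $ i) * cnj (u $ i)) = 0))"

definition vnorm :: "complex vec \<Rightarrow> real" where
  "vnorm v = sqrt (\<Sum>i<dim_vec v. (cmod (v $ i))\<^sup>2)"

definition main_angle :: "complex mat \<Rightarrow> real \<Rightarrow> real" where
  "main_angle S t = vnorm (eig_proj S t (vec (dim_row S) (\<lambda>_. 1))) / sqrt (real (dim_row S))"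

text \<open>Smallest eigenvalue tau_1 (eigenvalues of Seidel matrices are real).\<close>
definition smallest_eig :: "complex mat \<Rightarrow> real" where
  "smallest_eig S = Min {t :: real. eigenvalue S (complex_of_real t)}"

definition tournament_type1 :: "nat \<Rightarrow> (nat \<Rightarrow> nat \<Rightarrow> bool) \<Rightarrow> bool" where
  "tournament_type1 n T \<longleftrightarrow>
     main_angle (seidel_mat n T) (smallest_eig (seidel_mat n T)) = 0"

end

theory Submission
  imports Defs "Jordan_Normal_Form.Schur_Decomposition"
begin

text \<open>The Seidel matrix \<open>S\<close> is Hermitian with spectrum \<open>{-\<theta>, 0, \<theta>}\<close>. Schur
  triangularization makes \<open>S\<^sup>3 - \<theta>\<^sup>2 S\<close> similar to a strictly upper triangular, hence nilpotent,
  matrix, and a nilpotent self-adjoint matrix vanishes. So the projection of the all-ones vector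
  \<open>j\<close> onto the \<open>(-\<theta>)\<close>-eigenspace is \<open>(S\<^sup>2 j - \<theta> S j) / (2\<theta>\<^sup>2)\<close>, and Type (1) forces
  \<open>S\<^sup>2 j = \<theta> S j\<close>. Now \<open>S j = i c\<close>, where \<open>c\<^sub>x\<close> is the out-degree minus the in-degree of
  \<open>x\<close>; since \<open>S\<close> is skew-symmetric up to the factor \<open>i\<close>, summing the entries of
  \<open>S\<^sup>2 j = \<theta> S j\<close> gives \<open>\<Sum> c\<^sub>x\<^sup>2 = i \<theta> \<Sum> c\<^sub>x = 0\<close>. But in a tournament of even order
  every \<open>c\<^sub>x\<close> is odd.\<close>

lemma pow_mat_add:
  fixes A :: "'a::semiring_1 mat"
  assumes "A \<in> carrier_mat n n"
  shows "A ^\<^sub>m (k + l) = A ^\<^sub>m k * A ^\<^sub>m l"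
  by (induction l) (use assms in \<open>simp_all add: assoc_mult_mat[of _ n n _ n _ n]\<close>)

lemma smult_mat_mult_mat_vec:
  fixes A :: "'a::comm_ring mat"
  assumes "A \<in> carrier_mat n m" and "v \<in> carrier_vec m"
  shows "(k \<cdot>\<^sub>m A) *\<^sub>v v = k \<cdot>\<^sub>v (A *\<^sub>v v)"
  using assms by (intro eq_vecI) (auto simp: scalar_prod_def sum_distrib_left ac_simps)

lemma eq_of_minus_vec_eq_zero:
  fixes v w :: "'a::ab_group_add vec"
  assumes "v \<in> carrier_vec n" and "w \<in> carrier_vec n" and "v - w = 0\<^sub>v n"
  shows "v = w"
proof (rule eq_vecI)
  fix i assume i: "i < dim_vec w"
  have "dim_vec v = n" "dim_vec w = n" using assms by auto
  then show "v $ i = w $ i"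
    using i arg_cong[OF assms(3), of "\<lambda>u. u $ i"] by simp
qed (use assms in simp)

lemma sum_mult_mat_vec:
  assumes "A \<in> carrier_mat m n" and "v \<in> carrier_vec n"
  shows "(\<Sum>i<m. (A *\<^sub>v v) $ i) = (\<Sum>k<n. (\<Sum>i<m. A $$ (i, k)) * v $ k)"
  using assms by (simp add: scalar_prod_def lessThan_atLeast0 sum_distrib_right sum.swap[of _ "{0..<m}"])

lemma eigenvalue_iff_mem_roots:
  fixes A :: "'a::field mat"
  assumes "A \<in> carrier_mat n n" and "char_poly A = (\<Prod>e\<leftarrow>es. [:- e, 1:])"
  shows "eigenvalue A z \<longleftrightarrow> z \<in> set es"
  by (simp add: eigenvalue_root_char_poly[OF assms(1)] assms(2) poly_prod_list prod_list_zero_iff o_def image_iff)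

section \<open>Triangular and similar matrices\<close>

lemma upper_triangular_mult_entry:
  fixes A B :: "'a::comm_ring_1 mat"
  assumes A: "A \<in> carrier_mat n n" and B: "B \<in> carrier_mat n n"
    and uA: "upper_triangular A" and uB: "upper_triangular B"
    and ji: "j \<le> i" and i: "i < n"
  shows "(A * B) $$ (i, j) = A $$ (i, i) * B $$ (i, j)"
proof -
  have "(A * B) $$ (i, j) = (\<Sum>l<n. A $$ (i, l) * B $$ (l, j))"
    using A B i ji by (simp add: scalar_prod_def lessThan_atLeast0)
  also have "\<dots> = (\<Sum>l<n. if l = i then A $$ (i, i) * B $$ (i, j) else 0)"
  proof (rule sum.cong[OF refl])
    fix l assume l: "l \<in> {..<n}"
    have "A $$ (i, l) = 0" if "l < i" using uA that i A by auto
    moreover have "B $$ (l, j) = 0" if "i < l" using uB that ji l B by auto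
    ultimately show "A $$ (i, l) * B $$ (l, j) = (if l = i then A $$ (i, i) * B $$ (i, j) else 0)"
      by (cases i l rule: linorder_cases) auto
  qed
  finally show ?thesis using i by simp
qed

lemma upper_triangular_mult:
  fixes A B :: "'a::comm_ring_1 mat"
  assumes "A \<in> carrier_mat n n" "B \<in> carrier_mat n n" "upper_triangular A" "upper_triangular B"
  shows "upper_triangular (A * B)"
proof (rule upper_triangularI)
  fix i j assume "j < i" and "i < dim_row (A * B)"
  then show "(A * B) $$ (i, j) = 0"
    using assms upper_triangular_mult_entry[OF assms, of j i] upper_triangularD[OF assms(4), of j i]
    by auto
qed

lemma strictly_upper_triangular_pow_entry:
  fixes N :: "'a::comm_ring_1 mat"
  assumes N: "N \<in> carrier_mat n n" and strict: "\<And>i j. i < n \<Longrightarrow> j \<le> i \<Longrightarrow> N $$ (i, j) = 0"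
  shows "i < n \<Longrightarrow> j < n \<Longrightarrow> j < i + k \<Longrightarrow> (N ^\<^sub>m k) $$ (i, j) = 0"
proof (induction k arbitrary: j)
  case 0
  then show ?case using N by simp
next
  case (Suc k)
  have "(N ^\<^sub>m Suc k) $$ (i, j) = (\<Sum>l<n. (N ^\<^sub>m k) $$ (i, l) * N $$ (l, j))"
    using N Suc.prems by (simp add: scalar_prod_def lessThan_atLeast0)
  also have "\<dots> = 0"
  proof (intro sum.neutral ballI)
    fix l assume "l \<in> {..<n}"
    then show "(N ^\<^sub>m k) $$ (i, l) * N $$ (l, j) = 0"
      using Suc strict[of l j] by (cases "l < i + k") auto
  qed
  finally show ?case .
qed

lemma strictly_upper_triangular_nilpotent:
  fixes N :: "'a::comm_ring_1 mat"
  assumes "N \<in> carrier_mat n n" and "\<And>i j. i < n \<Longrightarrow> j \<le> i \<Longrightarrow> N $$ (i, j) = 0"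
  shows "N ^\<^sub>m n = 0\<^sub>m n n"
  using assms strictly_upper_triangular_pow_entry[OF assms] by (intro eq_matI) auto

lemma upper_triangular_cube_minus_smult_nilpotent:
  fixes B :: "'a::comm_ring_1 mat"
  assumes B: "B \<in> carrier_mat n n" and ut: "upper_triangular B"
    and diag: "\<forall>e\<in>set (diag_mat B). e ^ 3 = c * e"
  shows "(B ^\<^sub>m 3 - c \<cdot>\<^sub>m B) ^\<^sub>m n = 0\<^sub>m n n"
proof (rule strictly_upper_triangular_nilpotent)
  show "B ^\<^sub>m 3 - c \<cdot>\<^sub>m B \<in> carrier_mat n n"
    using B by (intro minus_carrier_mat smult_carrier_mat pow_carrier_mat)
  fix i j assume i: "i < n" and ji: "j \<le> i"
  have "B ^\<^sub>m 3 = B * B * B" using B by (simp add: numeral_3_eq_3)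
  moreover have "(B * B * B) $$ (i, j) = B $$ (i, i) ^ 2 * B $$ (i, j)"
    using upper_triangular_mult_entry[OF mult_carrier_mat[OF B B] B upper_triangular_mult[OF B B ut ut]
        ut ji i] upper_triangular_mult_entry[OF B B ut ut order.refl i]
    by (simp add: power2_eq_square)
  ultimately have entry: "(B ^\<^sub>m 3 - c \<cdot>\<^sub>m B) $$ (i, j) = (B $$ (i, i) ^ 2 - c) * B $$ (i, j)"
    using B i ji by (simp add: algebra_simps)
  show "(B ^\<^sub>m 3 - c \<cdot>\<^sub>m B) $$ (i, j) = 0"
  proof (cases "j = i")
    case True
    have "B $$ (i, i) \<in> set (diag_mat B)" using i B unfolding diag_mat_def by auto
    then show ?thesis
      using diag True unfolding entry by (simp add: algebra_simps power3_eq_cube power2_eq_square)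
  next
    case False
    then show ?thesis using upper_triangularD[OF ut, of j i] B i ji unfolding entry by auto
  qed
qed

lemma similar_mat_wit_minus:
  fixes A :: "'a::comm_ring_1 mat"
  assumes wit: "similar_mat_wit A B P Q" and wit': "similar_mat_wit A' B' P Q"
  shows "similar_mat_wit (A - A') (B - B') P Q"
proof -
  define n where "n = dim_row A"
  note AB = similar_mat_witD[OF n_def wit]
  note AB' = similar_mat_witD[OF refl wit']
  have n: "dim_row A' = n" using carrier_matD(1)[OF AB(6)] carrier_matD(1)[OF AB'(6)] by simp
  have A': "A' \<in> carrier_mat n n" using AB'(4) unfolding n .
  have B': "B' \<in> carrier_mat n n" using AB'(5) unfolding n .
  have distrib: "P * (B - B') * Q = P * B * Q - P * B' * Q"
    using mult_minus_distrib_mat[OF AB(6,5) B']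
      minus_mult_distrib_mat[OF mult_carrier_mat[OF AB(6,5)] mult_carrier_mat[OF AB(6) B'] AB(7)]
    by simp
  show ?thesis
  proof (rule similar_mat_witI[OF AB(1,2) _ _ _ AB(6,7)])
    show "A - A' = P * (B - B') * Q" unfolding distrib AB(3) AB'(3) ..
    show "A - A' \<in> carrier_mat n n" using A' by (rule minus_carrier_mat)
    show "B - B' \<in> carrier_mat n n" using B' by (rule minus_carrier_mat)
  qed
qed

section \<open>Self-adjoint matrices\<close>

definition self_adjoint_mat :: "complex mat \<Rightarrow> nat \<Rightarrow> bool" where
  "self_adjoint_mat A n \<longleftrightarrow> A \<in> carrier_mat n n \<and>
     (\<forall>x\<in>carrier_vec n. \<forall>y\<in>carrier_vec n. (A *\<^sub>v x) \<bullet>c y = x \<bullet>c (A *\<^sub>v y))"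

lemma self_adjoint_matI:
  assumes A: "A \<in> carrier_mat n n"
    and herm: "\<And>i j. i < n \<Longrightarrow> j < n \<Longrightarrow> A $$ (i, j) = cnj (A $$ (j, i))"
  shows "self_adjoint_mat A n"
  unfolding self_adjoint_mat_def
proof (intro conjI ballI A)
  fix x y :: "complex vec" assume x: "x \<in> carrier_vec n" and y: "y \<in> carrier_vec n"
  have "(A *\<^sub>v x) \<bullet>c y = (\<Sum>i<n. \<Sum>j<n. A $$ (i, j) * x $ j * cnj (y $ i))"
    using A x y by (simp add: scalar_prod_def lessThan_atLeast0 sum_distrib_right)
  also have "\<dots> = (\<Sum>j<n. \<Sum>i<n. x $ j * cnj (A $$ (j, i) * y $ i))"
  proof (subst sum.swap, intro sum.cong refl)
    fix j i assume "j \<in> {..<n}" and "i \<in> {..<n}"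
    then show "A $$ (i, j) * x $ j * cnj (y $ i) = x $ j * cnj (A $$ (j, i) * y $ i)"
      using herm[of i j] by simp
  qed
  also have "\<dots> = x \<bullet>c (A *\<^sub>v y)"
    using A x y by (simp add: scalar_prod_def lessThan_atLeast0 sum_distrib_left)
  finally show "(A *\<^sub>v x) \<bullet>c y = x \<bullet>c (A *\<^sub>v y)" .
qed

lemma self_adjoint_mat_pow:
  assumes sa: "self_adjoint_mat A n"
  shows "self_adjoint_mat (A ^\<^sub>m k) n"
proof (induction k)
  case 0
  then show ?case using sa unfolding self_adjoint_mat_def by auto
next
  case (Suc k)
  have A: "A \<in> carrier_mat n n" using sa self_adjoint_mat_def by auto
  have comm: "A ^\<^sub>m k * A = A * A ^\<^sub>m k"
    using pow_mat_add[OF A, of k 1] pow_mat_add[OF A, of 1 k] A by (simp add: add.commute)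
  show ?case unfolding self_adjoint_mat_def
  proof (intro conjI ballI)
    fix x y :: "complex vec" assume x: "x \<in> carrier_vec n" and y: "y \<in> carrier_vec n"
    have "(A ^\<^sub>m Suc k *\<^sub>v x) \<bullet>c y = (A ^\<^sub>m k *\<^sub>v (A *\<^sub>v x)) \<bullet>c y"
      using A x by (simp add: assoc_mult_mat_vec[of _ n n _ n])
    also have "\<dots> = (A *\<^sub>v x) \<bullet>c (A ^\<^sub>m k *\<^sub>v y)"
      using Suc.IH A x y unfolding self_adjoint_mat_def by simp
    also have "\<dots> = x \<bullet>c (A *\<^sub>v (A ^\<^sub>m k *\<^sub>v y))"
      using sa A x mult_mat_vec_carrier[OF pow_carrier_mat[OF A] y]
      unfolding self_adjoint_mat_def by blast
    also have "\<dots> = x \<bullet>c (A ^\<^sub>m Suc k *\<^sub>v y)"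
      using A y comm by (simp add: assoc_mult_mat_vec[of _ n n _ n])
    finally show "(A ^\<^sub>m Suc k *\<^sub>v x) \<bullet>c y = x \<bullet>c (A ^\<^sub>m Suc k *\<^sub>v y)" .
  qed (rule pow_carrier_mat[OF A])
qed

lemma self_adjoint_mat_diff_smult:
  assumes saA: "self_adjoint_mat A n" and saB: "self_adjoint_mat B n"
  shows "self_adjoint_mat (A - complex_of_real c \<cdot>\<^sub>m B) n"
proof -
  have A: "A \<in> carrier_mat n n" and B: "B \<in> carrier_mat n n"
    using saA saB self_adjoint_mat_def by auto
  have mv: "(A - complex_of_real c \<cdot>\<^sub>m B) *\<^sub>v v = A *\<^sub>v v - complex_of_real c \<cdot>\<^sub>v (B *\<^sub>v v)"
    if "v \<in> carrier_vec n" for v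
    using A B that by (simp add: minus_mult_distrib_mat_vec[of _ n n] smult_mat_mult_mat_vec)
  show ?thesis unfolding self_adjoint_mat_def
  proof (intro conjI ballI)
    fix x y :: "complex vec" assume x: "x \<in> carrier_vec n" and y: "y \<in> carrier_vec n"
    have "((A - complex_of_real c \<cdot>\<^sub>m B) *\<^sub>v x) \<bullet>c y
        = (A *\<^sub>v x) \<bullet>c y - complex_of_real c * ((B *\<^sub>v x) \<bullet>c y)"
      using A B x y by (simp add: mv minus_scalar_prod_distrib[of _ n])
    also have "\<dots> = x \<bullet>c (A *\<^sub>v y) - complex_of_real c * (x \<bullet>c (B *\<^sub>v y))"
      using saA saB x y unfolding self_adjoint_mat_def by simp
    also have "\<dots> = x \<bullet>c ((A - complex_of_real c \<cdot>\<^sub>m B) *\<^sub>v y)"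
    proof -
      have "conjugate (A *\<^sub>v y - complex_of_real c \<cdot>\<^sub>v (B *\<^sub>v y))
          = conjugate (A *\<^sub>v y) - complex_of_real c \<cdot>\<^sub>v conjugate (B *\<^sub>v y)"
        using A B by (intro eq_vecI) auto
      then show ?thesis
        using A B x y by (simp add: mv scalar_prod_minus_distrib[of _ n])
    qed
    finally show "((A - complex_of_real c \<cdot>\<^sub>m B) *\<^sub>v x) \<bullet>c y
        = x \<bullet>c ((A - complex_of_real c \<cdot>\<^sub>m B) *\<^sub>v y)" .
  qed (intro minus_carrier_mat smult_carrier_mat A B)
qed

lemma self_adjoint_mat_pow_vanishes:
  assumes sa: "self_adjoint_mat M n" and van: "\<forall>x\<in>carrier_vec n. M ^\<^sub>m m *\<^sub>v x = 0\<^sub>v n"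
    and m: "m \<le> 2 * k" and x: "x \<in> carrier_vec n"
  shows "M ^\<^sub>m k *\<^sub>v x = 0\<^sub>v n"
proof -
  have M: "M \<in> carrier_mat n n" using sa self_adjoint_mat_def by auto
  have y: "M ^\<^sub>m k *\<^sub>v x \<in> carrier_vec n" using M x by (metis mult_mat_vec_carrier pow_carrier_mat)
  have "(M ^\<^sub>m k *\<^sub>v x) \<bullet>c (M ^\<^sub>m k *\<^sub>v x) = x \<bullet>c (M ^\<^sub>m k *\<^sub>v (M ^\<^sub>m k *\<^sub>v x))"
    using self_adjoint_mat_pow[OF sa, of k] x y unfolding self_adjoint_mat_def by blast
  also have "M ^\<^sub>m k *\<^sub>v (M ^\<^sub>m k *\<^sub>v x) = M ^\<^sub>m (k + k) *\<^sub>v x"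
    using M x by (simp add: pow_mat_add[OF M, of k k] assoc_mult_mat_vec[of _ n n _ n])
  also have "k + k = m + (2 * k - m)" using m by simp
  also have "M ^\<^sub>m (m + (2 * k - m)) *\<^sub>v x = M ^\<^sub>m m *\<^sub>v (M ^\<^sub>m (2 * k - m) *\<^sub>v x)"
    using M x by (simp add: pow_mat_add[OF M, of m] assoc_mult_mat_vec[of _ n n _ n])
  also have "\<dots> = 0\<^sub>v n"
    using van mult_mat_vec_carrier[OF pow_carrier_mat[OF M] x] by blast
  finally show ?thesis using x y by simp
qed

lemma self_adjoint_mat_nilpotent_mult_vec:
  assumes sa: "self_adjoint_mat M n" and van: "\<forall>x\<in>carrier_vec n. M ^\<^sub>m k *\<^sub>v x = 0\<^sub>v n"
    and x: "x \<in> carrier_vec n"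
  shows "M *\<^sub>v x = 0\<^sub>v n"
  using van x
proof (induction k arbitrary: x rule: less_induct)
  case (less k)
  have M: "M \<in> carrier_mat n n" using sa self_adjoint_mat_def by auto
  consider "k = 0" | "k = 1" | "k \<ge> 2" by linarith
  then show ?case
  proof cases
    case 1
    then have "x = 0\<^sub>v n" using less.prems M by simp
    then show ?thesis using M by auto
  next
    case 2
    then show ?thesis using less.prems M by simp
  next
    case 3
    then show ?thesis
      using less.IH[of "k - 1"] self_adjoint_mat_pow_vanishes[OF sa less.prems(1)] less.prems(2)
      by simp
  qed
qed

lemma self_adjoint_mat_cube_eq:
  fixes S :: "complex mat"
  assumes sa: "self_adjoint_mat S n"
    and cp: "char_poly S = (\<Prod>e\<leftarrow>es. [:- e, 1:])"
    and roots: "\<forall>e\<in>set es. e ^ 3 = complex_of_real c * e"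
    and x: "x \<in> carrier_vec n"
  shows "S *\<^sub>v (S *\<^sub>v (S *\<^sub>v x)) = complex_of_real c \<cdot>\<^sub>v (S *\<^sub>v x)"
proof -
  have S: "S \<in> carrier_mat n n" using sa self_adjoint_mat_def by auto
  obtain B P Q where "schur_decomposition S es = (B, P, Q)"
    by (cases "schur_decomposition S es") auto
  from schur_decomposition[OF S cp this] have wit: "similar_mat_wit S B P Q"
    and ut: "upper_triangular B" and diag: "diag_mat B = es" by auto
  from similar_mat_witD2[OF S wit] have B: "B \<in> carrier_mat n n"
    and P: "P \<in> carrier_mat n n" and Q: "Q \<in> carrier_mat n n" by auto
  define M where "M = S ^\<^sub>m 3 - complex_of_real c \<cdot>\<^sub>m S"
  have witM: "similar_mat_wit M (B ^\<^sub>m 3 - complex_of_real c \<cdot>\<^sub>m B) P Q"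
    unfolding M_def by (rule similar_mat_wit_minus[OF similar_mat_wit_pow[OF wit] similar_mat_wit_smult[OF wit]])
  have "(B ^\<^sub>m 3 - complex_of_real c \<cdot>\<^sub>m B) ^\<^sub>m n = 0\<^sub>m n n"
    using upper_triangular_cube_minus_smult_nilpotent[OF B ut] diag roots by simp
  then have "M ^\<^sub>m n = 0\<^sub>m n n"
    using similar_mat_wit_pow_id[OF witM, of n] P Q by simp
  then have "\<forall>y\<in>carrier_vec n. M ^\<^sub>m n *\<^sub>v y = 0\<^sub>v n" by auto
  then have "M *\<^sub>v x = 0\<^sub>v n"
    unfolding M_def
    by (rule self_adjoint_mat_nilpotent_mult_vec[OF self_adjoint_mat_diff_smult[OF self_adjoint_mat_pow[OF sa] sa] _ x])
  moreover have "S ^\<^sub>m 3 *\<^sub>v x = S *\<^sub>v (S *\<^sub>v (S *\<^sub>v x))"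
  proof -
    have "S ^\<^sub>m 3 = S * S * S" using S by (simp add: numeral_3_eq_3)
    then show ?thesis
      using assoc_mult_mat_vec[OF mult_carrier_mat[OF S S] S x]
        assoc_mult_mat_vec[OF S S mult_mat_vec_carrier[OF S x]] by simp
  qed
  then have "M *\<^sub>v x = S *\<^sub>v (S *\<^sub>v (S *\<^sub>v x)) - complex_of_real c \<cdot>\<^sub>v (S *\<^sub>v x)"
    unfolding M_def
    using minus_mult_distrib_mat_vec[OF pow_carrier_mat[OF S] smult_carrier_mat[OF S] x]
    by (simp add: smult_mat_mult_mat_vec[OF S x])
  ultimately show ?thesis
    using S x by (metis eq_of_minus_vec_eq_zero mult_mat_vec_carrier smult_carrier_vec)
qed

section \<open>Projections onto eigenspaces\<close>

lemma eigenspace_minus: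
  assumes S: "S \<in> carrier_mat n n" and v: "v \<in> eigenspace S t" and w: "w \<in> eigenspace S t"
  shows "v - w \<in> eigenspace S t"
proof -
  have vc: "v \<in> carrier_vec n" and wc: "w \<in> carrier_vec n"
    and Sv: "S *\<^sub>v v = complex_of_real t \<cdot>\<^sub>v v" and Sw: "S *\<^sub>v w = complex_of_real t \<cdot>\<^sub>v w"
    using S v w unfolding eigenspace_def by auto
  have "S *\<^sub>v (v - w) = complex_of_real t \<cdot>\<^sub>v (v - w)"
    using S vc wc unfolding mult_minus_distrib_mat_vec[OF S vc wc] Sv Sw
    by (intro eq_vecI) (auto simp: algebra_simps)
  then show ?thesis using S vc wc unfolding eigenspace_def by simp
qed

lemma eig_proj_eqI:
  assumes S: "S \<in> carrier_mat n n" and x: "x \<in> carrier_vec n"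
    and w: "w \<in> eigenspace S t" and orth: "\<And>u. u \<in> eigenspace S t \<Longrightarrow> (x - w) \<bullet>c u = 0"
  shows "eig_proj S t x = w"
  unfolding eig_proj_def
proof (rule the_equality)
  have sum_eq: "(\<Sum>i<dim_row S. (x $ i - v $ i) * cnj (u $ i)) = (x - v) \<bullet>c u"
    if "v \<in> eigenspace S t" "u \<in> eigenspace S t" for u v
    using that S x by (auto simp: eigenspace_def scalar_prod_def lessThan_atLeast0 intro!: sum.cong)
  show "w \<in> eigenspace S t \<and> (\<forall>u\<in>eigenspace S t. (\<Sum>i<dim_row S. (x $ i - w $ i) * cnj (u $ i)) = 0)"
    using w orth sum_eq by simp
  fix w' assume w': "w' \<in> eigenspace S t \<and>
    (\<forall>u\<in>eigenspace S t. (\<Sum>i<dim_row S. (x $ i - w' $ i) * cnj (u $ i)) = 0)"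
  have wc: "w \<in> carrier_vec n" and w'c: "w' \<in> carrier_vec n"
    using S w w' unfolding eigenspace_def by auto
  define u where "u = w - w'"
  have u: "u \<in> eigenspace S t" unfolding u_def using eigenspace_minus[OF S w] w' by blast
  then have uc: "u \<in> carrier_vec n" using S unfolding eigenspace_def by auto
  have "(x - w') - (x - w) = u" unfolding u_def using x wc w'c by (intro eq_vecI) auto
  then have "u \<bullet>c u = (x - w') \<bullet>c u - (x - w) \<bullet>c u"
    using x wc w'c uc by (simp add: minus_scalar_prod_distrib[of _ n, symmetric])
  also have "\<dots> = 0" using w' u orth sum_eq[of w' u] by simp
  finally have "u = 0\<^sub>v n" using uc by simp
  then show "w' = w" using wc w'c unfolding u_def by (metis eq_of_minus_vec_eq_zero)
qed

lemma self_adjoint_mat_cscalar_prod_eigenvector: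
  assumes sa: "self_adjoint_mat S n" and v: "v \<in> carrier_vec n" and u: "u \<in> eigenspace S t"
  shows "(S *\<^sub>v v) \<bullet>c u = complex_of_real t * (v \<bullet>c u)"
proof -
  have S: "S \<in> carrier_mat n n" using sa self_adjoint_mat_def by auto
  have uc: "u \<in> carrier_vec n" and Su: "S *\<^sub>v u = complex_of_real t \<cdot>\<^sub>v u"
    using S u unfolding eigenspace_def by auto
  have "(S *\<^sub>v v) \<bullet>c u = v \<bullet>c (S *\<^sub>v u)" using sa v uc unfolding self_adjoint_mat_def by blast
  then show ?thesis using v uc by (simp add: Su conjugate_smult_vec)
qed

text \<open>On vectors with \<open>S\<^sup>3 x = \<theta>\<^sup>2 S x\<close> only the eigenvalues \<open>-\<theta>, 0, \<theta>\<close> matter, and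
  \<open>(\<lambda>\<^sup>2 - \<theta> \<lambda>) / (2\<theta>\<^sup>2)\<close> is the polynomial that is \<open>1\<close> at \<open>-\<theta>\<close> and \<open>0\<close> at \<open>0, \<theta>\<close>.\<close>
lemma eig_proj_neg_eq_of_cube:
  fixes \<theta> :: real
  assumes sa: "self_adjoint_mat S n" and \<theta>: "\<theta> \<noteq> 0" and x: "x \<in> carrier_vec n"
    and cube: "S *\<^sub>v (S *\<^sub>v (S *\<^sub>v x)) = complex_of_real (\<theta>\<^sup>2) \<cdot>\<^sub>v (S *\<^sub>v x)"
  shows "eig_proj S (- \<theta>) x =
    complex_of_real (1 / (2 * \<theta>\<^sup>2)) \<cdot>\<^sub>v (S *\<^sub>v (S *\<^sub>v x) - complex_of_real \<theta> \<cdot>\<^sub>v (S *\<^sub>v x))"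
    (is "_ = ?a \<cdot>\<^sub>v (?s2 - ?t \<cdot>\<^sub>v ?s1)")
proof (rule eig_proj_eqI)
  show S: "S \<in> carrier_mat n n" using sa self_adjoint_mat_def by auto
  have s1: "?s1 \<in> carrier_vec n" and s2: "?s2 \<in> carrier_vec n" using S x by auto
  have a: "?a * ?t\<^sup>2 = 1 / 2" using \<theta> by (simp add: power2_eq_square)
  have "S *\<^sub>v (?a \<cdot>\<^sub>v (?s2 - ?t \<cdot>\<^sub>v ?s1)) = ?a \<cdot>\<^sub>v (?t\<^sup>2 \<cdot>\<^sub>v ?s1 - ?t \<cdot>\<^sub>v ?s2)"
    using S s1 s2 cube by (simp add: mult_mat_vec[OF S] mult_minus_distrib_mat_vec[OF S])
  also have "\<dots> = complex_of_real (- \<theta>) \<cdot>\<^sub>v (?a \<cdot>\<^sub>v (?s2 - ?t \<cdot>\<^sub>v ?s1))"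
    using s1 s2 by (intro eq_vecI) (auto simp: algebra_simps power2_eq_square)
  finally show "?a \<cdot>\<^sub>v (?s2 - ?t \<cdot>\<^sub>v ?s1) \<in> eigenspace S (- \<theta>)"
    using S s1 s2 unfolding eigenspace_def by simp
  fix u assume u: "u \<in> eigenspace S (- \<theta>)"
  then have uc: "u \<in> carrier_vec n" using S unfolding eigenspace_def by auto
  have "?s1 \<bullet>c u = - ?t * (x \<bullet>c u)"
    using self_adjoint_mat_cscalar_prod_eigenvector[OF sa x u] by simp
  moreover have "?s2 \<bullet>c u = ?t\<^sup>2 * (x \<bullet>c u)"
    using self_adjoint_mat_cscalar_prod_eigenvector[OF sa s1 u] \<open>?s1 \<bullet>c u = - ?t * (x \<bullet>c u)\<close>
    by (simp add: power2_eq_square)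
  moreover have "(?a \<cdot>\<^sub>v (?s2 - ?t \<cdot>\<^sub>v ?s1)) \<bullet>c u = ?a * (?s2 \<bullet>c u - ?t * (?s1 \<bullet>c u))"
    using s1 s2 uc
    by (simp add: smult_scalar_prod_distrib[of _ n] minus_scalar_prod_distrib[of _ n])
  ultimately show "(x - ?a \<cdot>\<^sub>v (?s2 - ?t \<cdot>\<^sub>v ?s1)) \<bullet>c u = 0"
    using x s1 s2 uc a \<theta> by (simp add: minus_scalar_prod_distrib[of _ n] algebra_simps power2_eq_square)
qed (use x in simp)

lemma vnorm_eq_0_iff: "vnorm v = 0 \<longleftrightarrow> v = 0\<^sub>v (dim_vec v)"
proof -
  have "vnorm v = 0 \<longleftrightarrow> (\<forall>i<dim_vec v. (cmod (v $ i))\<^sup>2 = 0)"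
    unfolding vnorm_def by (simp add: sum_nonneg_eq_0_iff lessThan_def)
  also have "\<dots> \<longleftrightarrow> v = 0\<^sub>v (dim_vec v)"
    by (auto intro!: eq_vecI) (metis index_zero_vec(1))
  finally show ?thesis .
qed

lemma main_angle_neg_eq_0_imp_sq_mult_ones:
  fixes S :: "complex mat" and n :: nat and \<theta> :: real
  defines "j \<equiv> vec n (\<lambda>_. 1)"
  assumes sa: "self_adjoint_mat S n" and n: "n > 0" and \<theta>: "\<theta> \<noteq> 0"
    and cube: "S *\<^sub>v (S *\<^sub>v (S *\<^sub>v j)) = complex_of_real (\<theta>\<^sup>2) \<cdot>\<^sub>v (S *\<^sub>v j)"
    and angle: "main_angle S (- \<theta>) = 0"
  shows "S *\<^sub>v (S *\<^sub>v j) = complex_of_real \<theta> \<cdot>\<^sub>v (S *\<^sub>v j)"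
proof -
  have S: "S \<in> carrier_mat n n" using sa self_adjoint_mat_def by auto
  have j: "j \<in> carrier_vec n" unfolding j_def by simp
  define w where "w = S *\<^sub>v (S *\<^sub>v j) - complex_of_real \<theta> \<cdot>\<^sub>v (S *\<^sub>v j)"
  have w: "w \<in> carrier_vec n" unfolding w_def using S j by simp
  have "eig_proj S (- \<theta>) j = complex_of_real (1 / (2 * \<theta>\<^sup>2)) \<cdot>\<^sub>v w"
    unfolding w_def by (rule eig_proj_neg_eq_of_cube[OF sa \<theta> j cube])
  then have "vnorm (complex_of_real (1 / (2 * \<theta>\<^sup>2)) \<cdot>\<^sub>v w) = 0"
    using angle n S unfolding main_angle_def j_def by simp
  then have zero: "complex_of_real (1 / (2 * \<theta>\<^sup>2)) \<cdot>\<^sub>v w = 0\<^sub>v n"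
    using w by (simp add: vnorm_eq_0_iff)
  have "w $ i = 0" if "i < n" for i
  proof -
    have "complex_of_real (1 / (2 * \<theta>\<^sup>2)) * w $ i = 0"
      using arg_cong[OF zero, of "\<lambda>v. v $ i"] w that by simp
    then show ?thesis using \<theta> by simp
  qed
  then have "w = 0\<^sub>v n" using w by (intro eq_vecI) auto
  then show ?thesis
    using S j unfolding w_def by (metis eq_of_minus_vec_eq_zero mult_mat_vec_carrier smult_carrier_vec)
qed

lemma smallest_eig_eq:
  fixes \<theta> :: real
  assumes "S \<in> carrier_mat n n" and "char_poly S = (\<Prod>e\<leftarrow>es. [:- e, 1:])"
    and "set es = {- complex_of_real \<theta>, 0, complex_of_real \<theta>}" and "\<theta> > 0"
  shows "smallest_eig S = - \<theta>"
proof -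
  have "{t. eigenvalue S (complex_of_real t)} = {- \<theta>, 0, \<theta>}"
    using assms(1-3) by (auto simp: eigenvalue_iff_mem_roots simp flip: of_real_minus)
  then show ?thesis
    unfolding smallest_eig_def using \<open>\<theta> > 0\<close> by (intro Min_eqI) auto
qed

section \<open>Seidel matrices of tournaments\<close>

definition net_score :: "nat \<Rightarrow> (nat \<Rightarrow> nat \<Rightarrow> bool) \<Rightarrow> nat \<Rightarrow> int" where
  "net_score n T x = (\<Sum>y<n. of_bool (T x y) - of_bool (T y x))"

lemma seidel_mat_carrier: "seidel_mat n T \<in> carrier_mat n n"
  unfolding seidel_mat_def adj_mat_def by auto

lemma dim_seidel_mat [simp]: "dim_row (seidel_mat n T) = n" "dim_col (seidel_mat n T) = n"
  using seidel_mat_carrier by auto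

lemma seidel_mat_entry:
  "x < n \<Longrightarrow> y < n \<Longrightarrow> seidel_mat n T $$ (x, y) = \<i> * (of_bool (T x y) - of_bool (T y x))"
  unfolding seidel_mat_def adj_mat_def by auto

lemma seidel_mat_self_adjoint: "self_adjoint_mat (seidel_mat n T) n"
  by (rule self_adjoint_matI[OF seidel_mat_carrier]) (simp add: seidel_mat_entry algebra_simps)

lemma seidel_mat_mult_ones:
  "i < n \<Longrightarrow> (seidel_mat n T *\<^sub>v vec n (\<lambda>_. 1)) $ i = \<i> * of_int (net_score n T i)"
  by (simp add: seidel_mat_carrier seidel_mat_entry net_score_def scalar_prod_def lessThan_atLeast0
      sum_distrib_left of_int_sum)

lemma seidel_mat_col_sum:
  "k < n \<Longrightarrow> (\<Sum>i<n. seidel_mat n T $$ (i, k)) = - \<i> * of_int (net_score n T k)"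
  by (simp add: seidel_mat_entry net_score_def sum_distrib_left of_int_sum sum_negf[symmetric]
      algebra_simps)

lemma sum_net_score: "(\<Sum>x<n. net_score n T x) = 0"
proof -
  have "(\<Sum>x<n. \<Sum>y<n. of_bool (T y x)) = (\<Sum>x<n. \<Sum>y<n. (of_bool (T x y) :: int))"
    by (rule sum.swap)
  then show ?thesis unfolding net_score_def by (simp only: sum_subtractf)
qed

lemma odd_net_score:
  assumes tour: "tournament n T" and x: "x < n" and even: "even n"
  shows "odd (net_score n T x)"
proof -
  have "net_score n T x = (\<Sum>y<n. 2 * of_bool (T x y) - 1 + of_bool (y = x))"
    unfolding net_score_def
  proof (rule sum.cong[OF refl])
    fix y assume "y \<in> {..<n}"
    then have "\<not> T x x" and "y \<noteq> x \<Longrightarrow> T y x \<longleftrightarrow> \<not> T x y"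
      using tour x unfolding tournament_def by blast+
    then show "of_bool (T x y) - of_bool (T y x) = 2 * of_bool (T x y) - 1 + (of_bool (y = x) :: int)"
      by (cases "y = x"; cases "T x y") simp_all
  qed
  also have "\<dots> = (\<Sum>y<n. 2 * of_bool (T x y) - 1) + (\<Sum>y<n. of_bool (y = x))"
    by (rule sum.distrib)
  also have "(\<Sum>y<n. of_bool (y = x) :: int) = 1"
    using x by simp
  also have "(\<Sum>y<n. 2 * of_bool (T x y) - 1 :: int) = 2 * (\<Sum>y<n. of_bool (T x y)) - int n"
    by (simp add: sum_subtractf sum_distrib_left)
  finally show ?thesis using even by simp
qed

lemma seidel_mat_sq_ones_not_multiple:
  assumes tour: "tournament n T" and even: "even n" and n: "n > 0"
  shows "seidel_mat n T *\<^sub>v (seidel_mat n T *\<^sub>v vec n (\<lambda>_. 1))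
    \<noteq> c \<cdot>\<^sub>v (seidel_mat n T *\<^sub>v vec n (\<lambda>_. 1))"
proof
  let ?S = "seidel_mat n T" and ?c = "net_score n T"
  let ?s = "?S *\<^sub>v vec n (\<lambda>_. 1)"
  have s: "?s \<in> carrier_vec n" using mult_mat_vec_carrier[OF seidel_mat_carrier vec_carrier] .
  assume eq: "?S *\<^sub>v ?s = c \<cdot>\<^sub>v ?s"
  have "(\<Sum>i<n. (?S *\<^sub>v ?s) $ i) = (\<Sum>k<n. - \<i> * of_int (?c k) * (\<i> * of_int (?c k)))"
    unfolding sum_mult_mat_vec[OF seidel_mat_carrier s]
    by (rule sum.cong[OF refl]) (simp only: lessThan_iff seidel_mat_col_sum seidel_mat_mult_ones)
  also have "\<dots> = of_int (\<Sum>k<n. ?c k ^ 2)"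
    by (simp add: of_int_sum power2_eq_square algebra_simps)
  finally have lhs: "(\<Sum>i<n. (?S *\<^sub>v ?s) $ i) = of_int (\<Sum>k<n. ?c k ^ 2)" .
  have "(\<Sum>i<n. (c \<cdot>\<^sub>v ?s) $ i) = c * \<i> * of_int (\<Sum>k<n. ?c k)"
    using s by (simp add: seidel_mat_mult_ones sum_distrib_left of_int_sum mult.assoc
        del: index_mult_mat_vec)
  also have "\<dots> = 0" by (simp add: sum_net_score)
  finally have "of_int (\<Sum>k<n. ?c k ^ 2) = (0 :: complex)"
    unfolding lhs[symmetric] eq .
  then have "(\<Sum>k<n. ?c k ^ 2) = 0"
    by (simp only: of_int_eq_0_iff)
  then have "?c 0 = 0" using n by (simp add: sum_nonneg_eq_0_iff)
  then show False using odd_net_score[OF tour n even] by simp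
qed

lemma not_tournament_type1_of_char_poly:
  fixes \<theta> :: real
  assumes tour: "tournament n T" and even: "even n" and n: "n > 0" and \<theta>: "\<theta> > 0"
    and cp: "char_poly (seidel_mat n T) = (\<Prod>e\<leftarrow>es. [:- e, 1:])"
    and roots: "set es = {- complex_of_real \<theta>, 0, complex_of_real \<theta>}"
  shows "\<not> tournament_type1 n T"
proof
  assume type1: "tournament_type1 n T"
  let ?S = "seidel_mat n T" and ?j = "vec n (\<lambda>_. 1)"
  have "?S *\<^sub>v (?S *\<^sub>v (?S *\<^sub>v ?j)) = complex_of_real (\<theta>\<^sup>2) \<cdot>\<^sub>v (?S *\<^sub>v ?j)"
    by (rule self_adjoint_mat_cube_eq[OF seidel_mat_self_adjoint cp])
      (auto simp: roots power3_eq_cube power2_eq_square)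
  moreover have "main_angle ?S (- \<theta>) = 0"
    using type1 smallest_eig_eq[OF seidel_mat_carrier cp roots \<theta>] unfolding tournament_type1_def by simp
  ultimately have "?S *\<^sub>v (?S *\<^sub>v ?j) = complex_of_real \<theta> \<cdot>\<^sub>v (?S *\<^sub>v ?j)"
    using main_angle_neg_eq_0_imp_sq_mult_ones[OF seidel_mat_self_adjoint n] \<theta> by simp
  then show False
    using seidel_mat_sq_ones_not_multiple[OF tour even n] by simp
qed

theorem lemma4p2:
  fixes d :: nat and \<theta> :: real
  assumes "d \<ge> 2" and "\<theta> > 0"
  shows "\<not> (\<exists>T. tournament (2 * d) T \<and> tournament_type1 (2 * d) T \<and>
            char_poly (seidel_mat (2 * d) T) =
              [:complex_of_real \<theta>, 1:] ^ (d - 1) * [:0, 1:] ^ 2 *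
              [:- complex_of_real \<theta>, 1:] ^ (d - 1))"
proof (intro notI, elim exE conjE)
  fix T
  assume tour: "tournament (2 * d) T" and type1: "tournament_type1 (2 * d) T"
    and cp: "char_poly (seidel_mat (2 * d) T) =
      [:complex_of_real \<theta>, 1:] ^ (d - 1) * [:0, 1:] ^ 2 * [:- complex_of_real \<theta>, 1:] ^ (d - 1)"
  define es where "es = replicate (d - 1) (- complex_of_real \<theta>) @ replicate 2 0 @
    replicate (d - 1) (complex_of_real \<theta>)"
  have cp_es: "char_poly (seidel_mat (2 * d) T) = (\<Prod>e\<leftarrow>es. [:- e, 1:])"
    unfolding cp es_def by (simp add: mult.assoc)
  have roots: "set es = {- complex_of_real \<theta>, 0, complex_of_real \<theta>}"
    unfolding es_def using \<open>d \<ge> 2\<close> by auto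
  have "\<not> tournament_type1 (2 * d) T"
    by (rule not_tournament_type1_of_char_poly[OF tour _ _ \<open>\<theta> > 0\<close> cp_es roots])
      (use \<open>d \<ge> 2\<close> in auto)
  then show False using type1 by contradiction
qed

end
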